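(* Let $(B,\cdot,+,-,{}^{-1},0)$ be a right near-domain (as defined in the context), with $B_1=B\setminus\{0\}$, identity $e$ of the group $B_1$, $L(x)=0-x$ for $x\in B_1$, and let $h,r,v$ be elements as in axioms A5, A6, A7. Then: 1. $0\cdot x=0$ for every $x\in B_1$; 2. $h(x,y)=(L(x))^{-1}L(xy)$ for all $x,y\in B_1$; 3. for all $y,z\in B_1$ with $y+z\neq 0$, one has $L(z)-y\neq 0$ and $r(y,z)=(L(z)-y)^{-1}L(y+z)$; 4. $x-z=x\,(v(z))^{-1}+L(z)$ for all $x\in B$, $z\in B_1$; 5. $v(z)=(L(L(z)))^{-1}z$ for all $z\in B_1$.
   Context: A right near-domain is a set $B$ with a distinguished element $0\in B$, where $B_1:=B\setminus\{0\}$, together with maps $+:B\times B_1\to B$, $-:B\times B_1\to B$, $\cdot:B\times B_1\to B$ and ${}^{-1}:B_1\to B_1$, satisfying: A1. $(x-y)+y=x$ for all $x\in B$, $y\in B_1$; A2. $(x+y)-y=x$ for all $x\in B$, $y\in B_1$; A3. $x-x=0$ for all $x\in B_1$; A4. $B_1$ is closed under $\cdot$ and $(B_1,\cdot,{}^{-1})$ is a group, with identity element $e\in B_1$; A5. for all $y,z\in B_1$ there is $h(y,z)\in B_1$ such that $(x+y)z=x\,h(y,z)+yz$ for all $x\in B$; A6. for all $y,z\in B_1$ with $y+z\neq 0$ there is $r(y,z)\in B_1$ such that $(x+y)+z=x\,r(y,z)+(y+z)$ for all $x\in B$; A7. for all $z\in B_1$ there is $v(z)\in B_1$ such that $(x+(0-z))+z=x\,v(z)$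 for all $x\in B$ (it follows from A1–A3 that $0-z\neq 0$, so the left side is defined). Notation: $L(x)=0-x$ for $x\in B_1$ (so $L:B_1\to B_1$), and $xy$ denotes $x\cdot y$. *)

theory Defs
  imports Main
begin

text \<open>The partial operations on B x B1 (B1 = B - {z}) are modelled as total HOL functions;
  the axioms only constrain them on the intended domains.\<close>

definition right_near_domain ::
  "'a set \<Rightarrow> 'a \<Rightarrow> ('a \<Rightarrow> 'a \<Rightarrow> 'a) \<Rightarrow> ('a \<Rightarrow> 'a \<Rightarrow> 'a) \<Rightarrow> ('a \<Rightarrow> 'a \<Rightarrow> 'a)
     \<Rightarrow> ('a \<Rightarrow> 'a) \<Rightarrow> 'a \<Rightarrow> bool" where
  "right_near_domain B z add sub mul iv e \<longleftrightarrow>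
     z \<in> B \<and>
     \<comment> \<open>closure of the maps +, -, \<cdot> : B x B1 -> B and inverse : B1 -> B1\<close>
     (\<forall>x\<in>B. \<forall>y\<in>B - {z}. add x y \<in> B \<and> sub x y \<in> B \<and> mul x y \<in> B) \<and>
     (\<forall>x\<in>B - {z}. iv x \<in> B - {z}) \<and>
     \<comment> \<open>A1, A2\<close>
     (\<forall>x\<in>B. \<forall>y\<in>B - {z}. add (sub x y) y = x) \<and>
     (\<forall>x\<in>B. \<forall>y\<in>B - {z}. sub (add x y) y = x) \<and>
     \<comment> \<open>A3\<close>
     (\<forall>x\<in>B - {z}. sub x x = z) \<and>
     \<comment> \<open>A4: (B1, \<cdot>, iv) is a group with identity e\<close>
     (\<forall>x\<in>B - {z}. \<forall>y\<in>B - {z}. mul x y \<in> B - {z}) \<and>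
     (\<forall>x\<in>B - {z}. \<forall>y\<in>B - {z}. \<forall>w\<in>B - {z}. mul (mul x y) w = mul x (mul y w)) \<and>
     e \<in> B - {z} \<and>
     (\<forall>x\<in>B - {z}. mul e x = x \<and> mul x e = x) \<and>
     (\<forall>x\<in>B - {z}. mul (iv x) x = e \<and> mul x (iv x) = e) \<and>
     \<comment> \<open>A5\<close>
     (\<forall>y\<in>B - {z}. \<forall>w\<in>B - {z}. \<exists>hh\<in>B - {z}.
         \<forall>x\<in>B. mul (add x y) w = add (mul x hh) (mul y w)) \<and>
     \<comment> \<open>A6\<close>
     (\<forall>y\<in>B - {z}. \<forall>w\<in>B - {z}. add y w \<noteq> z \<longrightarrow> (\<exists>rr\<in>B - {z}.
         \<forall>x\<in>B. add (add x y) w = add (mul x rr) (add y w))) \<and>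
     \<comment> \<open>A7\<close>
     (\<forall>w\<in>B - {z}. \<exists>vv\<in>B - {z}. \<forall>x\<in>B. add (add x (sub z w)) w = mul x vv)"

end

theory Submission
  imports Defs
begin

text \<open>Everything rests on one observation: right multiplication by any w \<in> B1 is injective
  on all of B.  Indeed (x - e + e) w = (x - e) h(e, w) + w by A5, and taking x - e = 0 there shows
  0 h(e, w) = 0, so x \<mapsto> x h(e, w) is injective on B.  Hence 0 w = 0, since otherwise
  0 w = (0 w w\<inverse>) w would force 0 = 0 w w\<inverse> \<in> B1.  The formulas for h, r and v then follow
  by choosing x in A5, A6, A7 so that the left-hand side collapses (x = L y, x = L w - y and
  x = L (L w) make it 0, 0 and w respectively) and solving the resulting equation in the group B1.\<close>

locale near_domain =
  fixes B :: "'a set" and z :: 'a and add sub mul :: "'a \<Rightarrow> 'a \<Rightarrow> 'a"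
    and iv :: "'a \<Rightarrow> 'a" and e :: 'a
  assumes right_near_domain: "right_near_domain B z add sub mul iv e"
begin

abbreviation neg :: "'a \<Rightarrow> 'a" where "neg x \<equiv> sub z x"

lemma zero_in: "z \<in> B"
  and add_closed: "x \<in> B \<Longrightarrow> y \<in> B - {z} \<Longrightarrow> add x y \<in> B"
  and sub_closed: "x \<in> B \<Longrightarrow> y \<in> B - {z} \<Longrightarrow> sub x y \<in> B"
  and mul_closed: "x \<in> B \<Longrightarrow> y \<in> B - {z} \<Longrightarrow> mul x y \<in> B"
  and iv_closed: "x \<in> B - {z} \<Longrightarrow> iv x \<in> B - {z}"
  and sub_add_cancel: "x \<in> B \<Longrightarrow> y \<in> B - {z} \<Longrightarrow> add (sub x y) y = x"
  and add_sub_cancel: "x \<in> B \<Longrightarrow> y \<in> B - {z} \<Longrightarrow> sub (add x y) y = x"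
  and sub_self: "x \<in> B - {z} \<Longrightarrow> sub x x = z"
  and mul_nonzero: "x \<in> B - {z} \<Longrightarrow> y \<in> B - {z} \<Longrightarrow> mul x y \<in> B - {z}"
  and mul_assoc: "x \<in> B - {z} \<Longrightarrow> y \<in> B - {z} \<Longrightarrow> w \<in> B - {z} \<Longrightarrow>
      mul (mul x y) w = mul x (mul y w)"
  and unit_nonzero: "e \<in> B - {z}"
  and mul_unit_left: "x \<in> B - {z} \<Longrightarrow> mul e x = x"
  and mul_unit_right: "x \<in> B - {z} \<Longrightarrow> mul x e = x"
  and iv_mul: "x \<in> B - {z} \<Longrightarrow> mul (iv x) x = e"
  and mul_iv: "x \<in> B - {z} \<Longrightarrow> mul x (iv x) = e"
  and right_distrib_ex: "y \<in> B - {z} \<Longrightarrow> w \<in> B - {z} \<Longrightarrow>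
      \<exists>hh\<in>B - {z}. \<forall>x\<in>B. mul (add x y) w = add (mul x hh) (mul y w)"
  using right_near_domain unfolding right_near_domain_def by auto

lemma add_right_cancel:
  assumes "a \<in> B" "b \<in> B" "y \<in> B - {z}" "add a y = add b y"
  shows "a = b"
  by (metis assms add_sub_cancel)

lemma zero_add: "y \<in> B - {z} \<Longrightarrow> add z y = y"
  by (metis DiffD1 sub_add_cancel sub_self)

lemma neg_add: "y \<in> B - {z} \<Longrightarrow> add (neg y) y = z"
  by (simp add: sub_add_cancel zero_in)

lemma eq_neg_if_add_eq_zero: "a \<in> B \<Longrightarrow> y \<in> B - {z} \<Longrightarrow> add a y = z \<Longrightarrow> a = neg y"
  by (metis add_sub_cancel)

lemma neg_nonzero:
  assumes y: "y \<in> B - {z}"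
  shows "neg y \<in> B - {z}"
proof -
  have "neg y \<noteq> z"
    using neg_add[OF y] zero_add[OF y] y by auto
  then show ?thesis
    using sub_closed[OF zero_in y] by blast
qed

lemma mul_eq_imp_eq_iv_mul:
  assumes a: "a \<in> B - {z}" and x: "x \<in> B - {z}" and "mul a x = c"
  shows "x = mul (iv a) c"
  using assms mul_assoc[OF iv_closed[OF a] a x] by (simp add: iv_mul mul_unit_left)

lemma mul_iv_mul_cancel_nonzero:
  assumes "x \<in> B - {z}" "w \<in> B - {z}"
  shows "mul (mul x (iv w)) w = x"
  using assms mul_assoc[OF assms(1) iv_closed[OF assms(2)] assms(2)]
  by (simp add: iv_mul mul_unit_right)

lemma mul_mul_iv_cancel:
  assumes "x \<in> B - {z}" "w \<in> B - {z}"
  shows "mul (mul x w) (iv w) = x"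
  using assms mul_assoc[OF assms(1) assms(2) iv_closed[OF assms(2)]]
  by (simp add: mul_iv mul_unit_right)

lemma zero_mul_distrib_factor:
  assumes y: "y \<in> B - {z}" and w: "w \<in> B - {z}" and hh: "hh \<in> B - {z}"
    and distrib: "\<forall>x\<in>B. mul (add x y) w = add (mul x hh) (mul y w)"
  shows "mul z hh = z"
proof -
  have yw: "mul y w \<in> B - {z}"
    using mul_nonzero[OF y w] .
  have "mul (add z y) w = add (mul z hh) (mul y w)"
    using distrib zero_in by blast
  then have "add z (mul y w) = add (mul z hh) (mul y w)"
    by (simp add: zero_add[OF y] zero_add[OF yw])
  then show ?thesis
    using add_right_cancel zero_in mul_closed[OF zero_in hh] yw by metis
qed

lemma mul_right_inj_if_zero_mul:
  assumes hh: "hh \<in> B - {z}" and zero: "mul z hh = z"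
    and x: "x \<in> B" and x': "x' \<in> B" and eq: "mul x hh = mul x' hh"
  shows "x = x'"
proof (cases "x = z \<or> x' = z")
  case True
  have "t = z \<longleftrightarrow> mul t hh = z" if "t \<in> B" for t
    using that zero mul_nonzero[OF _ hh] by blast
  then show ?thesis
    using True eq x x' by metis
next
  case False
  then show ?thesis
    using eq mul_mul_iv_cancel[OF _ hh] x x' by (metis Diff_iff singletonD)
qed

lemma mul_right_inj:
  assumes w: "w \<in> B - {z}" and x: "x \<in> B" and x': "x' \<in> B" and eq: "mul x w = mul x' w"
  shows "x = x'"
proof -
  obtain hh where hh: "hh \<in> B - {z}"
    and distrib: "\<forall>t\<in>B. mul (add t e) w = add (mul t hh) (mul e w)"
    using right_distrib_ex[OF unit_nonzero w] by blast
  have zero: "mul z hh = z"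
    using zero_mul_distrib_factor[OF unit_nonzero w hh distrib] .
  have shift: "mul t w = add (mul (sub t e) hh) w" if t: "t \<in> B" for t
  proof -
    have "mul (add (sub t e) e) w = add (mul (sub t e) hh) (mul e w)"
      using distrib sub_closed[OF t unit_nonzero] by blast
    then show ?thesis
      by (simp add: sub_add_cancel[OF t unit_nonzero] mul_unit_left[OF w])
  qed
  have "add (mul (sub x e) hh) w = add (mul (sub x' e) hh) w"
    using eq shift[OF x] shift[OF x'] by simp
  then have "mul (sub x e) hh = mul (sub x' e) hh"
    using add_right_cancel mul_closed sub_closed hh w x x' unit_nonzero by meson
  then have "sub x e = sub x' e"
    using mul_right_inj_if_zero_mul[OF hh zero] sub_closed x x' unit_nonzero by blast
  then show ?thesis
    using sub_add_cancel x x' unit_nonzero by metis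
qed

lemma zero_mul:
  assumes w: "w \<in> B - {z}"
  shows "mul z w = z"
proof (rule ccontr)
  assume "mul z w \<noteq> z"
  then have a: "mul z w \<in> B - {z}"
    using mul_closed[OF zero_in w] by blast
  have "mul (mul (mul z w) (iv w)) w = mul z w"
    using mul_iv_mul_cancel_nonzero[OF a w] .
  then have "mul (mul z w) (iv w) = z"
    using mul_right_inj w mul_closed[OF _ iv_closed[OF w]] a zero_in by blast
  then show False
    using mul_nonzero[OF a iv_closed[OF w]] by simp
qed

lemma mul_iv_mul_cancel:
  assumes x: "x \<in> B" and w: "w \<in> B - {z}"
  shows "mul (mul x (iv w)) w = x"
proof (cases "x = z")
  case True
  then show ?thesis
    using zero_mul[OF iv_closed[OF w]] zero_mul[OF w] by simp
next
  case False
  then show ?thesis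
    using mul_iv_mul_cancel_nonzero x w by blast
qed

lemma distrib_factor_eq:
  assumes x: "x \<in> B - {z}" and y: "y \<in> B - {z}" and hh: "hh \<in> B - {z}"
    and distrib: "\<forall>t\<in>B. mul (add t x) y = add (mul t hh) (mul x y)"
  shows "hh = mul (iv (neg x)) (neg (mul x y))"
proof -
  have "add (mul (neg x) hh) (mul x y) = z"
    using distrib neg_nonzero[OF x] by (metis DiffD1 neg_add[OF x] zero_mul[OF y])
  then have "mul (neg x) hh = neg (mul x y)"
    using eq_neg_if_add_eq_zero mul_closed neg_nonzero[OF x] hh mul_nonzero[OF x y] by blast
  then show ?thesis
    using mul_eq_imp_eq_iv_mul[OF neg_nonzero[OF x] hh] by blast
qed

lemma assoc_factor_eq:
  assumes y: "y \<in> B - {z}" and w: "w \<in> B - {z}" and yw: "add y w \<noteq> z"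
    and rr: "rr \<in> B - {z}"
    and assoc: "\<forall>t\<in>B. add (add t y) w = add (mul t rr) (add y w)"
  shows "sub (neg w) y \<noteq> z \<and> rr = mul (iv (sub (neg w) y)) (neg (add y w))"
proof -
  define x where "x = sub (neg w) y"
  have nw: "neg w \<in> B"
    using neg_nonzero[OF w] by blast
  have xB: "x \<in> B"
    unfolding x_def using sub_closed[OF nw y] .
  have ywB: "add y w \<in> B - {z}"
    using add_closed y w yw by blast
  have "add (mul x rr) (add y w) = z"
    using assoc xB by (metis x_def sub_add_cancel[OF nw y] neg_add[OF w])
  then have xr: "mul x rr = neg (add y w)"
    using eq_neg_if_add_eq_zero mul_closed[OF xB rr] ywB by blast
  have "x \<noteq> z"
    using xr zero_mul[OF rr] neg_nonzero[OF ywB] by auto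
  then show ?thesis
    using mul_eq_imp_eq_iv_mul[OF _ rr xr] xB unfolding x_def by blast
qed

lemma sub_eq_add_neg_factor:
  assumes x: "x \<in> B" and w: "w \<in> B - {z}" and vv: "vv \<in> B - {z}"
    and shift: "\<forall>t\<in>B. add (add t (neg w)) w = mul t vv"
  shows "sub x w = add (mul x (iv vv)) (neg w)"
proof -
  define t where "t = mul x (iv vv)"
  have tB: "t \<in> B"
    unfolding t_def using mul_closed[OF x iv_closed[OF vv]] .
  have "add (add t (neg w)) w = x"
    using shift tB mul_iv_mul_cancel[OF x vv] unfolding t_def by metis
  then show ?thesis
    using add_sub_cancel[OF add_closed[OF tB neg_nonzero[OF w]] w] unfolding t_def by metis
qed

lemma neg_factor_eq:
  assumes w: "w \<in> B - {z}" and vv: "vv \<in> B - {z}"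
    and shift: "\<forall>t\<in>B. add (add t (neg w)) w = mul t vv"
  shows "vv = mul (iv (neg (neg w))) w"
proof -
  have nnw: "neg (neg w) \<in> B - {z}"
    using neg_nonzero[OF neg_nonzero[OF w]] .
  have "mul (neg (neg w)) vv = w"
    using shift nnw by (metis DiffD1 neg_add[OF neg_nonzero[OF w]] zero_add[OF w])
  then show ?thesis
    by (rule mul_eq_imp_eq_iv_mul[OF nnw vv])
qed

end

theorem mainTheorem1:
  fixes B :: "'a set" and z e :: 'a
    and add sub mul :: "'a \<Rightarrow> 'a \<Rightarrow> 'a" and iv :: "'a \<Rightarrow> 'a"
    and h r :: "'a \<Rightarrow> 'a \<Rightarrow> 'a" and v :: "'a \<Rightarrow> 'a"
  assumes rnd: "right_near_domain B z add sub mul iv e"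
    and h: "\<And>y w. y \<in> B - {z} \<Longrightarrow> w \<in> B - {z} \<Longrightarrow> h y w \<in> B - {z} \<and>
              (\<forall>x\<in>B. mul (add x y) w = add (mul x (h y w)) (mul y w))"
    and r: "\<And>y w. y \<in> B - {z} \<Longrightarrow> w \<in> B - {z} \<Longrightarrow> add y w \<noteq> z \<Longrightarrow> r y w \<in> B - {z} \<and>
              (\<forall>x\<in>B. add (add x y) w = add (mul x (r y w)) (add y w))"
    and v: "\<And>w. w \<in> B - {z} \<Longrightarrow> v w \<in> B - {z} \<and>
              (\<forall>x\<in>B. add (add x (sub z w)) w = mul x (v w))"
  defines "L \<equiv> (\<lambda>x. sub z x)"
  shows "(\<forall>x\<in>B - {z}. mul z x = z)
    \<and> (\<forall>x\<in>B - {z}. \<forall>y\<in>B - {z}. h x y = mul (iv (L x)) (L (mul x y)))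
    \<and> (\<forall>y\<in>B - {z}. \<forall>w\<in>B - {z}. add y w \<noteq> z \<longrightarrow>
          sub (L w) y \<noteq> z \<and> r y w = mul (iv (sub (L w) y)) (L (add y w)))
    \<and> (\<forall>x\<in>B. \<forall>w\<in>B - {z}. sub x w = add (mul x (iv (v w))) (L w))
    \<and> (\<forall>w\<in>B - {z}. v w = mul (iv (L (L w))) w)"
proof -
  interpret near_domain B z add sub mul iv e
    using rnd by unfold_locales
  have "h x y = mul (iv (neg x)) (neg (mul x y))" if "x \<in> B - {z}" "y \<in> B - {z}" for x y
    using h[OF that] distrib_factor_eq[OF that] by blast
  moreover have "sub (neg w) y \<noteq> z \<and> r y w = mul (iv (sub (neg w) y)) (neg (add y w))"
    if "y \<in> B - {z}" "w \<in> B - {z}" "add y w \<noteq> z" for y w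
    using r[OF that] assoc_factor_eq[OF that] by blast
  moreover have "sub x w = add (mul x (iv (v w))) (neg w)" if "x \<in> B" "w \<in> B - {z}" for x w
    using v[OF that(2)] sub_eq_add_neg_factor[OF that] by blast
  moreover have "v w = mul (iv (neg (neg w))) w" if "w \<in> B - {z}" for w
    using v[OF that] neg_factor_eq[OF that] by blast
  ultimately show ?thesis
    unfolding L_def by (simp add: zero_mul)
qed

end
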